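(* For $1\le i\le m$ let $V^m_i$ be the $m\times m$ matrix whose $k$-th column is $(1,x_k,x_k^2,\dots,x_k^{m-i},y_k,y_k^2,\dots,y_k^{i-1})^T$. Then on $U^m_B$, for $1\le i\le m-1$, $$\sigma^y_m\det(V^m_i)=\pm\,t^{m-i}\det(V^m_{i+1}).$$ Consequently, with $G_1=\prod_{1\le a<b\le m}(x_a-x_b)$ and $G_i=\dfrac{(\sigma^y_m)^{i-1}}{t^{(i-1)(m-i/2)}}G_1$ for $2\le i\le m$, one has $G_i=\pm\det V^m_i$ for all $i$; in particular each $G_i$ is a regular function on $U^m_B$, $G_m=\pm\prod_{a<b}(y_a-y_b)$, and $\sigma^x_{m-i}G_{i+1}=\sigma^y_iG_i$ for $1\le i\le m-1$.
   Context: Local model: $B$ is an irreducible base with a regular function $t$, $U=\{xy=t\}\subset\mathbb A^2\times B$, and $U^m_B\subset\mathbb A^{2m}\times B$ is given by $x_1y_1=\dots=x_my_m=t$. $\sigma^x_i,\sigma^y_i$ are the elementary symmetric functions of the $x_k$, resp. the $y_k$. *)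

theory Defs
  imports "Jordan_Normal_Form.Determinant"
begin

text \<open>Points of U^m_B are modelled by coordinates x, y :: nat => 'a (indices 0..m-1)
  and the value t of the regular function t, subject to x k * y k = t.\<close>

definition esym :: "nat \<Rightarrow> nat \<Rightarrow> (nat \<Rightarrow> 'a::comm_ring_1) \<Rightarrow> 'a" where
  "esym m j z = (\<Sum>S\<in>{S. S \<subseteq> {0..<m} \<and> card S = j}. \<Prod>k\<in>S. z k)"

definition Vmat :: "nat \<Rightarrow> nat \<Rightarrow> (nat \<Rightarrow> 'a::comm_ring_1) \<Rightarrow> (nat \<Rightarrow> 'a) \<Rightarrow> 'a mat" where
  "Vmat m i x y = mat m m (\<lambda>(r, k). if r \<le> m - i then x k ^ r else y k ^ (r - (m - i)))"

definition G1 :: "nat \<Rightarrow> (nat \<Rightarrow> 'a::comm_ring_1) \<Rightarrow> 'a" where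
  "G1 m x = (\<Prod>(a, b)\<in>{(a, b). a < b \<and> b < m}. x a - x b)"

text \<open>G_i = (sigma^y_m)^(i-1) / t^((i-1)(m - i/2)) * G_1; the exponent (i-1)(2m-i)/2 is an integer.\<close>
definition Gfun :: "nat \<Rightarrow> (nat \<Rightarrow> 'a::field) \<Rightarrow> (nat \<Rightarrow> 'a) \<Rightarrow> 'a \<Rightarrow> nat \<Rightarrow> 'a" where
  "Gfun m x y t i = (esym m m y) ^ (i - 1) / t ^ (((i - 1) * (2 * m - i)) div 2) * G1 m x"

end

theory Submission
  imports Defs
begin

(* The heart of the matter is the determinant identity
     sigma^y_m det V_i = +-t^(m-i) det V_(i+1)          (1 <= i <= m - 1):
   sigma^y_m = prod_k y_k, and multiplying column k of V_i by y_k turns the rows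
   1, x_k, ..., x_k^(m-i), y_k, ..., y_k^(i-1) into y_k, t, t x_k, ..., t x_k^(m-i-1),
   y_k^2, ..., y_k^i, i.e. into a row permutation of V_(i+1) with m - i rows scaled by t.
   Since G_(i+1) = sigma^y_m / t^(m-i) * G_i by definition, this identity gives
   G_i = +-det V_i by induction on i, starting from the Vandermonde determinant
   G_1 = +-det V_1.  As V_m is the Vandermonde matrix in the y_k, G_m = +-prod (y_a - y_b).
   Finally sigma^x_(m-i) sigma^y_m = t^(m-i) sigma^y_i on U^m_B (complementary subsets),
   which turns the recursion for G into sigma^x_(m-i) G_(i+1) = sigma^y_i G_i. *)

lemma det_scale_rows:
  fixes A :: "'a::comm_ring_1 mat"
  assumes A: "A \<in> carrier_mat n n"
  shows "det (mat n n (\<lambda>(r, k). c r * A $$ (r, k))) = prod c {0..<n} * det A"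
proof -
  have "det (mat n n (\<lambda>(r, k). c r * A $$ (r, k)))
      = (\<Sum>p | p permutes {0..<n}. prod c {0..<n} * (signof p * (\<Prod>r = 0..<n. A $$ (r, p r))))"
    unfolding det_def'[OF mat_carrier]
  proof (rule sum.cong)
    fix p assume "p \<in> {p. p permutes {0..<n}}"
    then have "\<And>r. r < n \<Longrightarrow> p r < n" by (auto dest: permutes_in_image)
    then show "signof p * (\<Prod>r = 0..<n. mat n n (\<lambda>(r, k). c r * A $$ (r, k)) $$ (r, p r))
        = prod c {0..<n} * (signof p * (\<Prod>r = 0..<n. A $$ (r, p r)))"
      by (simp add: prod.distrib)
  qed simp
  also have "\<dots> = prod c {0..<n} * det A"
    by (simp add: det_def'[OF A] sum_distrib_left)
  finally show ?thesis .
qed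

lemma det_scale_cols:
  fixes A :: "'a::comm_ring_1 mat"
  assumes A: "A \<in> carrier_mat n n"
  shows "det (mat n n (\<lambda>(r, k). A $$ (r, k) * d k)) = prod d {0..<n} * det A"
proof -
  have "det (mat n n (\<lambda>(r, k). A $$ (r, k) * d k))
      = det (transpose_mat (mat n n (\<lambda>(r, k). A $$ (r, k) * d k)))"
    by (rule det_transpose[OF mat_carrier, symmetric])
  also have "transpose_mat (mat n n (\<lambda>(r, k). A $$ (r, k) * d k))
      = mat n n (\<lambda>(r, k). d r * transpose_mat A $$ (r, k))"
    using A by (auto intro!: eq_matI)
  also have "det \<dots> = prod d {0..<n} * det (transpose_mat A)"
    by (rule det_scale_rows) (use A in simp)
  also have "det (transpose_mat A) = det A"
    by (rule det_transpose[OF A])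
  finally show ?thesis .
qed

(* Subtracting z 0 times row r - 1 from row r (for all r > 0 simultaneously, via a unitriangular
  factor) turns the Vandermonde matrix into one whose first row is 1 and whose column k below it
  is divisible by z k - z 0. *)
lemma vandermonde_row_reduction:
  fixes z :: "nat \<Rightarrow> 'a::comm_ring_1"
  shows "det (mat (Suc n) (Suc n) (\<lambda>(r, k). z k ^ r))
       = det (mat (Suc n) (Suc n) (\<lambda>(r, k). if r = 0 then 1 else z k ^ (r - 1) * (z k - z 0)))"
    (is "det ?V = det ?W")
proof -
  define N where "N = Suc n"
  define L :: "'a mat"
    where "L = mat N N (\<lambda>(r, j). (if j = r then 1 else 0) + (if Suc j = r then - z 0 else 0))"
  have L: "L \<in> carrier_mat N N" and V: "?V \<in> carrier_mat N N"
    by (auto simp: L_def N_def)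
  have det_L: "det L = 1"
    by (subst det_lower_triangular[OF _ L]) (auto simp: L_def prod_list_diag_prod intro!: prod.neutral)
  have "L * ?V = ?W"
  proof (rule eq_matI)
    fix r k assume "r < dim_row ?W" "k < dim_col ?W"
    then have r: "r < N" "r < Suc n" and k: "k < N" "k < Suc n" by (auto simp: N_def)
    have "(L * ?V) $$ (r, k)
        = (\<Sum>j<N. ((if j = r then 1 else 0) + (if Suc j = r then - z 0 else 0)) * z k ^ j)"
      using r k by (auto simp: L_def N_def scalar_prod_def intro!: sum.cong)
    also have "\<dots> = (\<Sum>j<N. (if j = r then z k ^ j else 0))
                   + (\<Sum>j<N. (if Suc j = r then - z 0 * z k ^ j else 0))"
      by (subst sum.distrib[symmetric], rule sum.cong) auto
    also have "\<dots> = ?W $$ (r, k)"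
    proof (cases r)
      case (Suc r0)
      have "(\<Sum>j<N. (if Suc j = r then - z 0 * z k ^ j else 0)) = - z 0 * z k ^ r0"
        using Suc r by (simp add: sum.delta')
      then show ?thesis using Suc r k by (simp add: algebra_simps)
    qed (use r k in \<open>simp add: N_def\<close>)
    finally show "(L * ?V) $$ (r, k) = ?W $$ (r, k)" .
  qed (auto simp: L_def N_def)
  then show ?thesis
    using det_mult[OF L V] det_L by (simp add: N_def)
qed

(* The Vandermonde determinant, by Laplace expansion along the first column of the reduced matrix. *)
lemma vandermonde_det:
  fixes z :: "nat \<Rightarrow> 'a::comm_ring_1"
  shows "det (mat n n (\<lambda>(r, k). z k ^ r)) = (\<Prod>b<n. \<Prod>a<b. z b - z a)"
proof (induction n arbitrary: z)
  case 0
  then show ?case by (simp add: det_def)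
next
  case (Suc n)
  define W where "W = mat (Suc n) (Suc n) (\<lambda>(r, k). if r = 0 then 1 else z k ^ (r - 1) * (z k - z 0))"
  have W: "W \<in> carrier_mat (Suc n) (Suc n)" by (simp add: W_def)
  have "det (mat (Suc n) (Suc n) (\<lambda>(r, k). z k ^ r)) = det W"
    unfolding W_def by (rule vandermonde_row_reduction)
  also have "\<dots> = (\<Sum>r<Suc n. W $$ (r, 0) * cofactor W r 0)"
    by (rule laplace_expansion_column[OF W]) simp
  also have "\<dots> = det (mat_delete W 0 0)"
    by (simp add: W_def cofactor_def sum.lessThan_Suc_shift del: sum.lessThan_Suc)
  also have "mat_delete W 0 0
      = mat n n (\<lambda>(r, k). mat n n (\<lambda>(r, k). z (Suc k) ^ r) $$ (r, k) * (z (Suc k) - z 0))"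
    by (rule eq_matI) (auto simp: mat_delete_def W_def)
  also have "det \<dots> = (\<Prod>k = 0..<n. z (Suc k) - z 0) * (\<Prod>b<n. \<Prod>a<b. z (Suc b) - z (Suc a))"
    by (subst det_scale_cols) (auto simp: Suc)
  also have "\<dots> = (\<Prod>b<Suc n. \<Prod>a<b. z b - z a)"
    by (simp add: prod.lessThan_Suc_shift prod.distrib atLeast0LessThan del: prod.lessThan_Suc)
  finally show ?case .
qed

lemma prod_pairs_nested:
  "(\<Prod>(a, b)\<in>{(a, b). a < b \<and> b < (m::nat)}. f a b) = (\<Prod>b<m. \<Prod>a<b. f a b)"
proof -
  have pairs: "{(a, b). a < b \<and> b < m} = (\<lambda>(b, a). (a, b)) ` (SIGMA b:{..<m}. {..<b})"
    by auto
  have inj: "inj_on (\<lambda>(b, a). (a, b)) (SIGMA b:{..<m}. {..<b})"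
    by (auto simp: inj_on_def)
  have "(\<Prod>b<m. \<Prod>a<b. f a b) = (\<Prod>(b, a)\<in>(SIGMA b:{..<m}. {..<b}). f a b)"
    by (rule prod.Sigma) auto
  then show ?thesis
    unfolding pairs prod.reindex[OF inj] by (simp add: o_def case_prod_beta)
qed

lemma vandermonde_det_pairs:
  fixes z :: "nat \<Rightarrow> 'a::comm_ring_1"
  shows "(\<Prod>(a, b)\<in>{(a, b). a < b \<and> b < m}. z a - z b)
       = of_int ((-1) ^ card {(a, b). a < b \<and> b < (m::nat)}) * det (mat m m (\<lambda>(r, k). z k ^ r))"
proof -
  have "(\<Prod>(a, b)\<in>{(a, b). a < b \<and> b < m}. z a - z b)
      = (\<Prod>(a, b)\<in>{(a, b). a < b \<and> b < m}. (-1) * (z b - z a))"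
    by (rule prod.cong) auto
  also have "\<dots> = (-1) ^ card {(a, b). a < b \<and> b < m} * (\<Prod>(a, b)\<in>{(a, b). a < b \<and> b < m}. z b - z a)"
    unfolding case_prod_beta prod.distrib by simp
  finally show ?thesis
    by (simp add: prod_pairs_nested vandermonde_det)
qed

lemma esym_top: "esym m m y = (\<Prod>k<m. y k)"
proof -
  have "{S. S \<subseteq> {0..<m} \<and> card S = m} = {{0..<m}}"
    using card_subset_eq[of "{0..<m}"] by auto
  then show ?thesis by (simp add: esym_def atLeast0LessThan)
qed

(* On the locus x_k y_k = t, sigma^x_j sigma^y_m = t^j sigma^y_(m-j): a j-subset S contributes
  prod_S x_k prod_S y_k = t^j times the monomial of the complementary (m-j)-subset. *)
lemma esym_complement:
  fixes x y :: "nat \<Rightarrow> 'a::comm_ring_1"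
  assumes j: "j \<le> m" and xy: "\<forall>k<m. x k * y k = t"
  shows "esym m j x * esym m m y = t ^ j * esym m (m - j) y"
proof -
  define A where "A = {0..<m}"
  define C where "C = (\<lambda>j. {S. S \<subseteq> A \<and> card S = j})"
  have prod_S: "(\<Prod>k\<in>S. x k) * prod y A = t ^ j * prod y (A - S)" if "S \<in> C j" for S
  proof -
    have S: "S \<subseteq> A" "card S = j" "finite S"
      using that finite_subset by (auto simp: C_def A_def)
    have "prod y A = prod y S * prod y (A - S)"
      using prod.subset_diff[OF S(1)] by (simp add: A_def mult.commute)
    then have "(\<Prod>k\<in>S. x k) * prod y A = (\<Prod>k\<in>S. x k * y k) * prod y (A - S)"
      by (simp add: prod.distrib ac_simps)
    also have "(\<Prod>k\<in>S. x k * y k) = t ^ j"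
      using S xy by (simp add: A_def subset_eq)
    finally show ?thesis .
  qed
  have complement: "bij_betw (\<lambda>S. A - S) (C j) (C (m - j))"
  proof (rule bij_betwI[where g = "\<lambda>S. A - S"])
    show "(\<lambda>S. A - S) \<in> C j \<rightarrow> C (m - j)"
      by (auto simp: C_def A_def card_Diff_subset finite_subset)
    show "(\<lambda>S. A - S) \<in> C (m - j) \<rightarrow> C j"
      using j by (auto simp: C_def A_def card_Diff_subset finite_subset)
  qed (auto simp: C_def)
  have "esym m j x * esym m m y = (\<Sum>S\<in>C j. (\<Prod>k\<in>S. x k) * prod y A)"
    unfolding esym_top by (simp add: esym_def sum_distrib_right C_def A_def atLeast0LessThan)
  also have "\<dots> = t ^ j * (\<Sum>S\<in>C j. prod y (A - S))"
    by (simp add: prod_S sum_distrib_left)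
  also have "(\<Sum>S\<in>C j. prod y (A - S)) = (\<Sum>T\<in>C (m - j). prod y T)"
    by (rule sum.reindex_bij_betw[OF complement])
  finally show ?thesis by (simp add: esym_def C_def A_def)
qed

(* The row permutation relating y_k times column k of V_i to V_(i+1): the constant row moves to
  position m - i (where V_(i+1) has y_k), the x-powers move up by one, the y-powers stay. *)
definition shift_rows :: "nat \<Rightarrow> nat \<Rightarrow> nat \<Rightarrow> nat" where
  "shift_rows m i r = (if r = 0 then m - i else if r \<le> m - i then r - 1 else r)"

lemma shift_rows_permutes:
  assumes "1 \<le> i" "i \<le> m - 1"
  shows "shift_rows m i permutes {0..<m}"
proof (rule bij_imp_permutes)
  define inverse where "inverse = (\<lambda>r::nat. if r = m - i then 0 else if r < m - i then r + 1 else r)"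
  show "bij_betw (shift_rows m i) {0..<m} {0..<m}"
    by (rule bij_betwI[where g = inverse]) (use assms in \<open>auto simp: shift_rows_def inverse_def\<close>)
  show "shift_rows m i r = r" if "r \<notin> {0..<m}" for r
    using that assms by (auto simp: shift_rows_def)
qed

(* Entrywise form of the basic identity: since x_k y_k = t, y_k x_k^r = t x_k^(r-1) and
  y_k y_k^s = y_k^(s+1); so scaling column k of V_i by y_k gives the rows of V_(i+1) in the order
  shift_rows m i, with rows 1..m-i additionally multiplied by t. *)
lemma Vmat_scaled_entry:
  fixes x y :: "nat \<Rightarrow> 'a::comm_ring_1"
  assumes i: "1 \<le> i" "i \<le> m - 1" and r: "r < m" and k: "k < m" and xy: "x k * y k = t"
  shows "Vmat m i x y $$ (r, k) * y k
       = (if r \<in> {1..m - i} then t else 1) * Vmat m (i + 1) x y $$ (shift_rows m i r, k)"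
proof -
  have shifted: "shift_rows m i r < m"
    using r i by (auto simp: shift_rows_def)
  consider "r = 0" | "1 \<le> r" "r \<le> m - i" | "m - i < r" by linarith
  then show ?thesis
  proof cases
    case 1
    then show ?thesis using r k i shifted by (auto simp: Vmat_def shift_rows_def)
  next
    case 2
    then obtain r0 where r0: "r = Suc r0" by (cases r) auto
    have "x k ^ r * y k = t * x k ^ r0"
      by (simp add: r0 xy[symmetric] ac_simps)
    then show ?thesis using 2 r k i shifted r0 by (auto simp: Vmat_def shift_rows_def)
  next
    case 3
    then have "r - (m - (i + 1)) = Suc (r - (m - i))"
      using i by auto
    then show ?thesis using 3 r k i shifted by (auto simp: Vmat_def shift_rows_def)
  qed
qed

lemma esym_times_det_Vmat:
  fixes x y :: "nat \<Rightarrow> 'a::comm_ring_1"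
  assumes i: "1 \<le> i" "i \<le> m - 1" and xy: "\<forall>k<m. x k * y k = t"
  shows "esym m m y * det (Vmat m i x y)
       = of_int (sign (shift_rows m i)) * t ^ (m - i) * det (Vmat m (i + 1) x y)"
proof -
  define c where "c = (\<lambda>r::nat. if r \<in> {1..m - i} then t else 1)"
  define P where "P = mat m m (\<lambda>(r, k). Vmat m (i + 1) x y $$ (shift_rows m i r, k))"
  have V: "Vmat m i x y \<in> carrier_mat m m" and V': "Vmat m (i + 1) x y \<in> carrier_mat m m"
    by (auto simp: Vmat_def)
  have "esym m m y * det (Vmat m i x y) = det (mat m m (\<lambda>(r, k). Vmat m i x y $$ (r, k) * y k))"
    by (simp add: det_scale_cols[OF V] esym_top atLeast0LessThan)
  also have "mat m m (\<lambda>(r, k). Vmat m i x y $$ (r, k) * y k) = mat m m (\<lambda>(r, k). c r * P $$ (r, k))"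
    using Vmat_scaled_entry[OF i, of _ _ x y t] xy by (auto simp: c_def P_def intro!: eq_matI)
  also have "det \<dots> = prod c {0..<m} * det P"
    by (rule det_scale_rows) (simp add: P_def)
  also have "det P = of_int (sign (shift_rows m i)) * det (Vmat m (i + 1) x y)"
    unfolding P_def by (rule det_permute_rows[OF V' shift_rows_permutes[OF i]])
  also have "prod c {0..<m} = t ^ (m - i)"
  proof -
    have "{0..<m} \<inter> {r. r \<in> {1..m - i}} = {1..m - i}" using i by auto
    then show ?thesis
      by (simp add: c_def prod.If_cases)
  qed
  finally show ?thesis by (simp add: ac_simps)
qed

lemma Gfun_exponent_step:
  fixes i m :: nat
  assumes "1 \<le> i" "i \<le> m - 1"
  shows "((i + 1 - 1) * (2 * m - (i + 1))) div 2 = ((i - 1) * (2 * m - i)) div 2 + (m - i)"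
proof -
  obtain j where j: "i = Suc j" using assms by (cases i) auto
  define k where "k = m - i - 1"
  have k: "m = j + k + 2" using assms j unfolding k_def by linarith
  have "2 * m - (i + 1) = j + 2 * k + 2" "2 * m - i = j + 2 * k + 3" "m - i = k + 1"
    using j k by auto
  moreover have "(j + 1) * (j + 2 * k + 2) = j * (j + 2 * k + 3) + 2 * (k + 1)"
    by (simp add: algebra_simps)
  ultimately show ?thesis using j by simp
qed

lemma Gfun_step:
  fixes x y :: "nat \<Rightarrow> 'b::field"
  assumes i: "1 \<le> i" "i \<le> m - 1" and t: "t \<noteq> 0"
  shows "Gfun m x y t (i + 1) = esym m m y / t ^ (m - i) * Gfun m x y t i"
proof -
  have "i + 1 - 1 = Suc (i - 1)" using i by simp
  then have "Gfun m x y t (i + 1)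
      = esym m m y ^ Suc (i - 1) / t ^ (((i - 1) * (2 * m - i)) div 2 + (m - i)) * G1 m x"
    unfolding Gfun_def Gfun_exponent_step[OF i] by simp
  then show ?thesis
    using t by (simp add: Gfun_def power_add field_simps)
qed

lemma Vmat_first: "Vmat m 1 x y = mat m m (\<lambda>(r, k). x k ^ r)"
  by (rule eq_matI) (auto simp: Vmat_def)

lemma Vmat_last: "Vmat m m x y = mat m m (\<lambda>(r, k). y k ^ r)"
  by (rule eq_matI) (auto simp: Vmat_def)

lemma minus_one_power_unit: "(-1::int) ^ n \<in> {1, -1}"
  by (cases "even n") auto

lemma sign_unit: "sign p \<in> {1, -1::int}"
  by (simp add: sign_def)

lemma Gfun_eq_det_Vmat:
  assumes "1 \<le> i" and "i \<le> m"
  shows "\<exists>\<epsilon>::int. \<epsilon> \<in> {1, -1} \<and>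
    (\<forall>(x :: nat \<Rightarrow> 'b::field) y t. t \<noteq> 0 \<and> (\<forall>k<m. x k * y k = t) \<longrightarrow>
       Gfun m x y t i = of_int \<epsilon> * det (Vmat m i x y))"
  using assms
proof (induction i rule: nat_induct_at_least)
  case base
  have "Gfun m x y t 1 = of_int ((-1) ^ card {(a, b). a < b \<and> b < m}) * det (Vmat m 1 x y)"
    for x y :: "nat \<Rightarrow> 'b" and t
    by (simp add: Gfun_def G1_def vandermonde_det_pairs Vmat_first[unfolded One_nat_def])
  then show ?case using minus_one_power_unit by blast
next
  case (Suc i)
  then have i: "1 \<le> i" "i \<le> m - 1" by auto
  obtain \<epsilon> where \<epsilon>: "\<epsilon> \<in> {1, -1::int}" and IH: "\<forall>(x :: nat \<Rightarrow> 'b) y t.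
      t \<noteq> 0 \<and> (\<forall>k<m. x k * y k = t) \<longrightarrow> Gfun m x y t i = of_int \<epsilon> * det (Vmat m i x y)"
    using Suc.IH[OF Suc_leD[OF Suc.prems]] by blast
  have "Gfun m x y t (Suc i) = of_int (\<epsilon> * sign (shift_rows m i)) * det (Vmat m (Suc i) x y)"
    if t: "t \<noteq> 0" and xy: "\<forall>k<m. x k * y k = t" for x y :: "nat \<Rightarrow> 'b" and t
  proof -
    have "Gfun m x y t (Suc i) = of_int \<epsilon> / t ^ (m - i) * (esym m m y * det (Vmat m i x y))"
      using Gfun_step[OF i t] IH t xy by simp
    also have "\<dots> = of_int (\<epsilon> * sign (shift_rows m i)) * det (Vmat m (Suc i) x y)"
      using esym_times_det_Vmat[OF i xy] t by simp
    finally show ?thesis .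
  qed
  moreover have "\<epsilon> * sign (shift_rows m i) \<in> {1, -1}"
    using \<epsilon> sign_unit[of "shift_rows m i"] by auto
  ultimately show ?case by blast
qed

lemma Gfun_last:
  assumes "1 \<le> m"
  shows "\<exists>\<epsilon>::int. \<epsilon> \<in> {1, -1} \<and>
    (\<forall>(x :: nat \<Rightarrow> 'b::field) y t. t \<noteq> 0 \<and> (\<forall>k<m. x k * y k = t) \<longrightarrow>
       Gfun m x y t m = of_int \<epsilon> * (\<Prod>(a, b)\<in>{(a, b). a < b \<and> b < m}. y a - y b))"
proof -
  obtain \<epsilon> where \<epsilon>: "\<epsilon> \<in> {1, -1::int}" and G: "\<And>(x :: nat \<Rightarrow> 'b) y t.
      t \<noteq> 0 \<and> (\<forall>k<m. x k * y k = t) \<Longrightarrow> Gfun m x y t m = of_int \<epsilon> * det (Vmat m m x y)"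
    using Gfun_eq_det_Vmat[of m m] assms by blast
  define c :: int where "c = (-1) ^ card {(a, b). a < b \<and> b < m}"
  have c: "c * c = 1" "c \<in> {1, -1}"
    unfolding c_def by (simp add: power_mult_distrib[symmetric]) (rule minus_one_power_unit)
  have "Gfun m x y t m = of_int (\<epsilon> * c) * (\<Prod>(a, b)\<in>{(a, b). a < b \<and> b < m}. y a - y b)"
    if "t \<noteq> 0 \<and> (\<forall>k<m. x k * y k = t)" for x y :: "nat \<Rightarrow> 'b" and t
  proof -
    have "(\<Prod>(a, b)\<in>{(a, b). a < b \<and> b < m}. y a - y b) = of_int c * det (Vmat m m x y)"
      unfolding c_def Vmat_last by (rule vandermonde_det_pairs)
    then show ?thesis
      using G[OF that] c(1) by (simp add: mult.assoc flip: of_int_mult)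
  qed
  moreover have "\<epsilon> * c \<in> {1, -1}" using \<epsilon> c(2) by auto
  ultimately show ?thesis by blast
qed

lemma Gfun_esym_relation:
  fixes x y :: "nat \<Rightarrow> 'b::field"
  assumes i: "1 \<le> i" "i \<le> m - 1" and t: "t \<noteq> 0" and xy: "\<forall>k<m. x k * y k = t"
  shows "esym m (m - i) x * Gfun m x y t (i + 1) = esym m i y * Gfun m x y t i"
proof -
  have complement: "esym m (m - i) x * esym m m y = t ^ (m - i) * esym m i y"
    using esym_complement[of "m - i" m x y t] xy i by (simp add: diff_diff_cancel)
  have "esym m (m - i) x * Gfun m x y t (i + 1)
      = esym m (m - i) x * esym m m y / t ^ (m - i) * Gfun m x y t i"
    unfolding Gfun_step[OF i t] by (simp add: field_simps)
  also have "\<dots> = esym m i y * Gfun m x y t i"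
    using t by (simp add: complement)
  finally show ?thesis .
qed

theorem mainTheorem3:
  fixes m :: nat
  assumes "1 \<le> m"
  shows
   "(\<forall>i. 1 \<le> i \<and> i \<le> m - 1 \<longrightarrow>
      (\<exists>\<epsilon>::int. \<epsilon> \<in> {1, -1} \<and>
        (\<forall>(x :: nat \<Rightarrow> 'a::comm_ring_1) y t. (\<forall>k<m. x k * y k = t) \<longrightarrow>
           esym m m y * det (Vmat m i x y) = of_int \<epsilon> * t ^ (m - i) * det (Vmat m (i + 1) x y))))
    \<and> (\<forall>i. 1 \<le> i \<and> i \<le> m \<longrightarrow>
      (\<exists>\<epsilon>::int. \<epsilon> \<in> {1, -1} \<and>
        (\<forall>(x :: nat \<Rightarrow> 'b::field) y t. t \<noteq> 0 \<and> (\<forall>k<m. x k * y k = t) \<longrightarrow>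
           Gfun m x y t i = of_int \<epsilon> * det (Vmat m i x y))))
    \<and> (\<exists>\<epsilon>::int. \<epsilon> \<in> {1, -1} \<and>
        (\<forall>(x :: nat \<Rightarrow> 'b::field) y t. t \<noteq> 0 \<and> (\<forall>k<m. x k * y k = t) \<longrightarrow>
           Gfun m x y t m = of_int \<epsilon> * (\<Prod>(a, b)\<in>{(a, b). a < b \<and> b < m}. y a - y b)))
    \<and> (\<forall>i. 1 \<le> i \<and> i \<le> m - 1 \<longrightarrow>
        (\<forall>(x :: nat \<Rightarrow> 'b::field) y t. t \<noteq> 0 \<and> (\<forall>k<m. x k * y k = t) \<longrightarrow>
           esym m (m - i) x * Gfun m x y t (i + 1) = esym m i y * Gfun m x y t i))"
proof (intro conjI allI impI)
  fix i :: nat assume "1 \<le> i \<and> i \<le> m - 1"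
  then show "\<exists>\<epsilon>::int. \<epsilon> \<in> {1, -1} \<and>
      (\<forall>(x :: nat \<Rightarrow> 'a::comm_ring_1) y t. (\<forall>k<m. x k * y k = t) \<longrightarrow>
         esym m m y * det (Vmat m i x y) = of_int \<epsilon> * t ^ (m - i) * det (Vmat m (i + 1) x y))"
    by (intro exI[of _ "sign (shift_rows m i)"] conjI sign_unit allI impI esym_times_det_Vmat) auto
qed (rule Gfun_eq_det_Vmat Gfun_last[OF assms] Gfun_esym_relation; auto)+

end
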